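(* Fix $q\in(0,1)$. For all $i_1,i_2,j_1,j_2\in\mathbb{Z}_{\ge0}$, as rational functions of $(s_1,s_2)$, $$R_{\frac{s_2}{s_1},s_1,s_2}(i_1,i_2;j_1,j_2)=\mathbf{1}_{i_1+j_2=i_2+j_1}\cdot\mathbf{1}_{j_2\le j_1}\cdot\varphi_{q,s_2^2/s_1^2,\,s_2^2}(j_2\mid j_1).$$
   Context: $q$-Pochhammer symbols: $(a;q)_k=\prod_{i=0}^{k-1}(1-aq^i)$ for $k\ge1$, $(a;q)_0=1$, and for $k\le-1$, $(a;q)_k=1/(a/q;1/q)_{-k}$. The regularized terminating series is ${}_{r+1}\bar\phi_r\bigl(q^{-n};a_1,\dots,a_r;b_1,\dots,b_r\mid q,z\bigr)=\sum_{k=0}^{n}\frac{z^k(q^{-n};q)_k}{(q;q)_k}\prod_{i=1}^r(a_i;q)_k(b_iq^k;q)_{n-k}$. The cross vertex weights are $$R_{z,s_1,s_2}(i_1,i_2;j_1,j_2)=\mathbf{1}_{j_1+i_2=i_1+j_2}\,\frac{(-s_1z)^{j_1}q^{\frac12 j_1(j_1+2i_2-1)}s_2^{\,i_2+j_2-i_1}(zs_1s_2^{-1};q)_{j_2-j_1}}{(q;q)_{i_1}(zs_1s_2;q)_{i_1+j_2}(s_1^{-2}q^{1-i_2};q)_{i_2-j_2}}\,{}_4\bar\phi_3\!\left(\begin{matrix}q^{-i_1};q^{-j_1},zs_1^{-1}s_2,qz^{-1}s_1^{-1}s_2\\ s_2^2,q^{1+j_2-j_1},s_1^{-2}q^{1-i_1-j_2}\end{matrix}\Big|q,q\right).$$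 The $q$-beta-binomial weights are, for $m\in\mathbb{Z}_{\ge0}$ and $0\le j\le m$, $\varphi_{q,\mu,\nu}(j\mid m)=\mu^j\frac{(\nu/\mu;q)_j(\mu;q)_{m-j}}{(\nu;q)_m}\frac{(q;q)_m}{(q;q)_j(q;q)_{m-j}}$ (where $\mu^j(\nu/\mu;q)_j$ means $\prod_{i=0}^{j-1}(\mu-\nu q^i)$), and $\varphi_{q,\mu,\nu}(j\mid m)=0$ for $j>m$. *)

theory Defs
  imports Complex_Main
begin

definition qpoch :: "complex \<Rightarrow> complex \<Rightarrow> int \<Rightarrow> complex" where
  "qpoch a q k =
     (if 0 \<le> k then (\<Prod>i<nat k. (1 - a * q ^ i))
      else 1 / (\<Prod>i<nat (- k). (1 - (a / q) * (1 / q) ^ i)))"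

text \<open>Regularized terminating series
  {}_{r+1}\bar\phi_r(q^{-n}; a_1..a_r; b_1..b_r | q, z); the lists as, bs have length r.\<close>
definition phibar :: "nat \<Rightarrow> complex list \<Rightarrow> complex list \<Rightarrow> complex \<Rightarrow> complex \<Rightarrow> complex" where
  "phibar n as bs q z =
     (\<Sum>k=0..n. z ^ k * qpoch (q powi (- int n)) q (int k) / qpoch q q (int k) *
        (\<Prod>ab\<leftarrow>zip as bs. qpoch (fst ab) q (int k) * qpoch (snd ab * q ^ k) q (int n - int k)))"

definition Rw :: "real \<Rightarrow> complex \<Rightarrow> complex \<Rightarrow> complex \<Rightarrow> nat \<Rightarrow> nat \<Rightarrow> nat \<Rightarrow> nat \<Rightarrow> complex" where
  "Rw q z s1 s2 i1 i2 j1 j2 =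
     (let Q = complex_of_real q in
      (if j1 + i2 = i1 + j2 then 1 else 0) *
      ((- s1 * z) ^ j1 * complex_of_real (q powr (real j1 * (real j1 + 2 * real i2 - 1) / 2))
        * s2 powi (int i2 + int j2 - int i1) * qpoch (z * s1 / s2) Q (int j2 - int j1)
       / (qpoch Q Q (int i1) * qpoch (z * s1 * s2) Q (int (i1 + j2))
          * qpoch (inverse (s1 ^ 2) * Q powi (1 - int i2)) Q (int i2 - int j2)))
      * phibar i1
          [Q powi (- int j1), z * inverse s1 * s2, Q * inverse z * inverse s1 * s2]
          [s2 ^ 2, Q powi (1 + int j2 - int j1), inverse (s1 ^ 2) * Q powi (1 - int i1 - int j2)]
          Q Q)"

text \<open>q-beta-binomial weight phi_{q,mu,nu}(j | m); mu^j (nu/mu;q)_j is the product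
  \<Prod>_{i<j} (mu - nu q^i).\<close>
definition qbb :: "real \<Rightarrow> complex \<Rightarrow> complex \<Rightarrow> nat \<Rightarrow> nat \<Rightarrow> complex" where
  "qbb q mu nu j m =
     (let Q = complex_of_real q in
      if j \<le> m then
        (\<Prod>i<j. (mu - nu * Q ^ i)) * qpoch mu Q (int (m - j)) / qpoch nu Q (int m)
        * (qpoch Q Q (int m) / (qpoch Q Q (int j) * qpoch Q Q (int (m - j))))
      else 0)"

end

theory Submission
  imports Defs
begin

text \<open>At $z = s_2/s_1$ the factor $(z s_1 s_2^{-1};q)_{j_2-j_1} = (1;q)_{j_2-j_1}$ vanishes unless
  $j_2 \<le> j_1$, and the third numerator parameter $q z^{-1} s_1^{-1} s_2$ of the ${}_4\bar\phi_3$
  becomes $q$, so that it cancels the factor $(q;q)_k$. Writing $d = j_1 - j_2$, the denominator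
  parameter $q^{1-d}$ kills the first $d$ terms; after the shift $k = d + m$ what remains is a balanced
  terminating ${}_3\phi_2$, which the q-Pfaff-Saalschuetz formula sums in closed form. The resulting
  products of q-Pochhammer symbols collapse, by reflection formulas, to the q-beta-binomial weight.\<close>

lemma Suc_choose_two: "Suc n choose 2 = (n choose 2) + n"
  by (simp add: numeral_2_eq_2)

lemma add_choose_two: "(m + n) choose 2 = (m choose 2) + (n choose 2) + m * n"
  by (induction n) (simp_all add: Suc_choose_two)

lemma two_times_choose_two: "2 * int (n choose 2) = int n * int n - int n"
  by (induction n) (simp_all add: Suc_choose_two algebra_simps)

lemma prod_power_lessThan: "(\<Prod>i<n. q ^ i) = (q::'a::comm_monoid_mult) ^ (n choose 2)"
  by (induction n) (simp_all add: Suc_choose_two binomial_eq_0 power_add mult.commute)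

lemma power_int_mult_eq:
  fixes x :: "'a::division_ring"
  shows "x \<noteq> 0 \<Longrightarrow> m + n = k \<Longrightarrow> x powi m * x powi n = x powi k"
  using power_int_add[of x m n] by auto

section \<open>Finite q-Pochhammer products\<close>

definition qpochhammer :: "'a::comm_ring_1 \<Rightarrow> 'a \<Rightarrow> nat \<Rightarrow> 'a" where
  "qpochhammer a q n = (\<Prod>i<n. 1 - a * q ^ i)"

definition qpochhammer_ivl :: "'a::comm_ring_1 \<Rightarrow> 'a \<Rightarrow> nat \<Rightarrow> nat \<Rightarrow> 'a" where
  "qpochhammer_ivl a q m n = (\<Prod>i\<in>{m..<n}. 1 - a * q ^ i)"

lemma qpochhammer_0 [simp]: "qpochhammer a q 0 = 1"
  by (simp add: qpochhammer_def)

lemma qpochhammer_Suc: "qpochhammer a q (Suc n) = qpochhammer a q n * (1 - a * q ^ n)"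
  by (simp add: qpochhammer_def)

lemma qpochhammer_Suc_shift: "qpochhammer a q (Suc n) = (1 - a) * qpochhammer (a * q) q n"
  unfolding qpochhammer_def prod.lessThan_Suc_shift by (simp add: mult.assoc)

lemma qpochhammer_add: "qpochhammer a q (n + m) = qpochhammer a q n * qpochhammer (a * q ^ n) q m"
  by (induction m) (simp_all add: qpochhammer_Suc power_add ac_simps)

lemma qpochhammer_eq_0: "i < n \<Longrightarrow> a * q ^ i = 1 \<Longrightarrow> qpochhammer a q n = 0"
  unfolding qpochhammer_def by (rule prod_zero) auto

lemma qpochhammer_base_nonzero:
  fixes q :: "'a::idom"
  assumes "\<And>n. q ^ Suc n \<noteq> 1"
  shows "qpochhammer q q n \<noteq> 0"
  using assms by (simp add: qpochhammer_def flip: power_Suc)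

lemma qpochhammer_shifted:
  "m \<le> n \<Longrightarrow> qpochhammer (a * q ^ m) q (n - m) = qpochhammer_ivl a q m n"
  unfolding qpochhammer_def qpochhammer_ivl_def
  using prod.shift_bounds_nat_ivl[of "\<lambda>i. 1 - a * q ^ i" 0 m "n - m"]
  by (simp add: atLeast0LessThan power_add ac_simps)

lemma qpochhammer_ivl_empty [simp]: "n \<le> m \<Longrightarrow> qpochhammer_ivl a q m n = 1"
  by (simp add: qpochhammer_ivl_def)

lemma qpochhammer_ivl_lower:
  "m < n \<Longrightarrow> qpochhammer_ivl a q m n = (1 - a * q ^ m) * qpochhammer_ivl a q (Suc m) n"
  unfolding qpochhammer_ivl_def by (simp add: prod.atLeast_Suc_lessThan)

lemma qpochhammer_ivl_upper:
  "m \<le> n \<Longrightarrow> qpochhammer_ivl a q m (Suc n) = qpochhammer_ivl a q m n * (1 - a * q ^ n)"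
  unfolding qpochhammer_ivl_def by (simp add: prod.atLeastLessThan_Suc)

lemma qpochhammer_ivl_shift:
  fixes q :: "'a::field"
  shows "q \<noteq> 0 \<Longrightarrow> qpochhammer_ivl (a / q) q (Suc m) (Suc n) = qpochhammer_ivl a q m n"
  unfolding qpochhammer_ivl_def prod.shift_bounds_Suc_ivl
  by (rule prod.cong) simp_all

lemma qpoch_of_nat: "qpoch a q (int n) = qpochhammer a q n"
  by (simp add: qpoch_def qpochhammer_def)

lemma qpoch_minus: "qpoch a q (- int n) = 1 / qpochhammer (a / q) (1 / q) n"
  unfolding qpoch_def by (cases "n = 0") (simp_all add: qpochhammer_def)

lemma qpochhammer_reflection:
  fixes q :: "'a::field"
  assumes "q \<noteq> 0" "d \<le> n"
  shows "qpochhammer (inverse (q ^ n)) q d * qpochhammer q q (n - d)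
    = (-1) ^ d * q powi (int (d choose 2) - int n * int d) * qpochhammer q q n"
  using assms(2)
proof (induction d)
  case 0
  then show ?case by (simp add: binomial_eq_0)
next
  case (Suc d)
  have "n - d = Suc (n - Suc d)"
    using Suc.prems by simp
  then have split: "qpochhammer q q (n - d) = qpochhammer q q (n - Suc d) * (1 - q ^ (n - d))"
    by (simp only: qpochhammer_Suc power_Suc)
  have factor: "1 - inverse (q ^ n) * q ^ d = - (q powi (int d - int n)) * (1 - q ^ (n - d))"
  proof -
    obtain m where n: "n = m + d"
      using Suc.prems by (metis le_add_diff_inverse2 Suc_leD)
    have pw: "q powi (int d - int n) = inverse (q ^ m)"
      by (simp add: n power_int_minus)
    have inv: "inverse (q ^ n) * q ^ d = inverse (q ^ m)"
      using assms(1) by (simp add: n power_add)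
    show ?thesis
      unfolding pw inv using assms(1) by (simp add: n field_simps)
  qed
  have "qpochhammer (inverse (q ^ n)) q (Suc d) * qpochhammer q q (n - Suc d)
      = - (q powi (int d - int n)) * (qpochhammer (inverse (q ^ n)) q d * qpochhammer q q (n - d))"
    unfolding split qpochhammer_Suc factor by (simp add: ac_simps)
  also have "\<dots> = (-1) ^ Suc d * (q powi (int d - int n) * q powi (int (d choose 2) - int n * int d))
      * qpochhammer q q n"
    using Suc by simp
  also have "q powi (int d - int n) * q powi (int (d choose 2) - int n * int d)
      = q powi (int (Suc d choose 2) - int n * int (Suc d))"
    using assms(1) by (simp add: Suc_choose_two algebra_simps flip: power_int_add)
  finally show ?case .
qed

lemma qpochhammer_inverse_base:
  fixes q :: "'a::field"
  assumes "q \<noteq> 0"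
  shows "qpochhammer (1 / q) (1 / q) d = (-1) ^ d * q powi (- int (Suc d choose 2)) * qpochhammer q q d"
proof (induction d)
  case 0
  then show ?case by (simp add: binomial_eq_0)
next
  case (Suc d)
  have "q powi (- int (Suc d)) = inverse (q ^ Suc d)"
    by (simp only: power_int_minus power_int_of_nat)
  then have factor: "1 - 1 / q * (1 / q) ^ d = - (q powi (- int (Suc d))) * (1 - q * q ^ d)"
    using assms by (simp add: field_simps)
  have "qpochhammer (1 / q) (1 / q) (Suc d)
      = (-1) ^ Suc d * (q powi (- int (Suc d)) * q powi (- int (Suc d choose 2))) * qpochhammer q q (Suc d)"
    unfolding qpochhammer_Suc Suc factor by (simp add: ac_simps)
  also have "q powi (- int (Suc d)) * q powi (- int (Suc d choose 2)) = q powi (- int (Suc (Suc d) choose 2))"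
    by (rule power_int_mult_eq[OF assms]) (simp add: Suc_choose_two)
  finally show ?case .
qed

lemma qpochhammer_reverse:
  fixes q :: "'a::field"
  assumes "q \<noteq> 0"
  shows "qpochhammer (a * q powi (1 - int k)) q k = qpochhammer a (1 / q) k"
proof -
  have "qpochhammer (a * q powi (1 - int k)) q k = (\<Prod>i<k. 1 - a * q powi (1 - int k) * q ^ (k - Suc i))"
    unfolding qpochhammer_def by (rule prod.nat_diff_reindex[symmetric])
  also have "\<dots> = qpochhammer a (1 / q) k"
    unfolding qpochhammer_def
  proof (rule prod.cong[OF refl])
    fix i assume "i \<in> {..<k}"
    then have "1 - int k + int (k - Suc i) = - int i"
      by simp
    from power_int_mult_eq[OF assms this]
    have "q powi (1 - int k) * q ^ (k - Suc i) = q powi (- int i)"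
      by (simp only: power_int_of_nat)
    then have "q powi (1 - int k) * q ^ (k - Suc i) = (1 / q) ^ i"
      by (simp add: power_int_minus power_divide inverse_eq_divide)
    then show "1 - a * q powi (1 - int k) * q ^ (k - Suc i) = 1 - a * (1 / q) ^ i"
      by (simp add: mult.assoc)
  qed
  finally show ?thesis .
qed

lemma qpochhammer_inverse_base_split:
  fixes q b :: complex
  assumes q: "q \<noteq> 0" and nonzero: "qpoch (b * q powi (1 - int N)) q (int N - int j) \<noteq> 0"
  shows "qpochhammer b (1 / q) N
    = qpochhammer b (1 / q) j * qpoch (b * q powi (1 - int N)) q (int N - int j)"
proof (cases "j \<le> N")
  case True
  then obtain k where N: "N = j + k"
    using le_Suc_ex by blast
  have "q powi (1 - int N) = q powi (- int j) * q powi (1 - int k)"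
    using power_int_mult_eq[OF q, of "- int j" "1 - int k" "1 - int N"] by (simp add: N)
  then have shift: "b * q powi (1 - int N) = b * (1 / q) ^ j * q powi (1 - int k)"
    by (simp add: power_int_minus power_divide inverse_eq_divide)
  have "qpoch (b * q powi (1 - int N)) q (int N - int j) = qpochhammer (b * q powi (1 - int N)) q k"
    by (simp add: N qpoch_of_nat)
  also have "\<dots> = qpochhammer (b * (1 / q) ^ j) (1 / q) k"
    unfolding shift by (rule qpochhammer_reverse[OF q])
  finally have "qpoch (b * q powi (1 - int N)) q (int N - int j)
      = qpochhammer (b * (1 / q) ^ j) (1 / q) k" .
  then show ?thesis
    by (simp add: N qpochhammer_add)
next
  case False
  then obtain k where j: "j = N + k"
    using le_Suc_ex nat_le_linear by blast
  have "q powi (1 - int N) / q = (1 / q) ^ N"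
    using q by (simp add: power_int_diff power_divide)
  then have "b * q powi (1 - int N) / q = b * (1 / q) ^ N"
    by (simp only: flip: times_divide_eq_right)
  then have "qpoch (b * q powi (1 - int N)) q (int N - int j)
      = 1 / qpochhammer (b * (1 / q) ^ N) (1 / q) k"
    by (simp add: j qpoch_minus)
  then show ?thesis
    using nonzero by (simp add: j qpochhammer_add)
qed

lemma prod_power_minus_eq_qpochhammer:
  fixes q :: "'a::field"
  assumes "q \<noteq> 0"
  shows "(\<Prod>i<n. q ^ i - b) = q ^ (n choose 2) * qpochhammer b (1 / q) n"
proof -
  have "(\<Prod>i<n. q ^ i - b) = (\<Prod>i<n. q ^ i * (1 - b * (1 / q) ^ i))"
    using assms by (intro prod.cong) (simp_all add: field_simps)
  then show ?thesis
    by (simp add: prod.distrib prod_power_lessThan qpochhammer_def)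
qed

section \<open>The q-Pfaff-Saalschuetz summation\<close>

text \<open>Below, saalschuetz_term and saalschuetz_sum are the two sides of the q-Pfaff-Saalschuetz
  summation ${}_3\phi_2(q^{-N}, A, B; C, D \mid q, q) = (C/A;q)_N (C/B;q)_N / ((C;q)_N (C/(AB);q)_N)$,
  $D = q^{1-N} A B / C$, multiplied by $(C;q)_N (D;q)_N$, using
  $(D;q)_N / (C/(AB);q)_N = \prod_{i<N} (-(AB/C) q^{-i})$ on the product side. In this form the
  identity needs no nonvanishing hypotheses on $C$ and $D$. It telescopes in $N$, with
  saalschuetz_certificate as the certificate.\<close>

definition saalschuetz_param :: "'a::field \<Rightarrow> 'a \<Rightarrow> 'a \<Rightarrow> 'a \<Rightarrow> nat \<Rightarrow> 'a" where
  "saalschuetz_param q A B C N = q * A * B * inverse (q ^ N) / C"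

definition saalschuetz_term :: "'a::field \<Rightarrow> 'a \<Rightarrow> 'a \<Rightarrow> 'a \<Rightarrow> nat \<Rightarrow> nat \<Rightarrow> 'a" where
  "saalschuetz_term q A B C N m =
     q ^ m * qpochhammer (inverse (q ^ N)) q m / qpochhammer q q m * qpochhammer A q m * qpochhammer B q m
     * qpochhammer_ivl C q m N * qpochhammer_ivl (saalschuetz_param q A B C N) q m N"

definition saalschuetz_sum :: "'a::field \<Rightarrow> 'a \<Rightarrow> 'a \<Rightarrow> 'a \<Rightarrow> nat \<Rightarrow> 'a" where
  "saalschuetz_sum q A B C N =
     qpochhammer (C / A) q N * qpochhammer (C / B) q N * (\<Prod>i<N. - (A * B / C) * inverse (q ^ i))"

definition saalschuetz_ratio :: "'a::field \<Rightarrow> 'a \<Rightarrow> 'a \<Rightarrow> 'a \<Rightarrow> nat \<Rightarrow> 'a" where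
  "saalschuetz_ratio q A B C N =
     (1 - C * q ^ N / A) * (1 - C * q ^ N / B) * (- (A * B / C) * inverse (q ^ N))"

definition saalschuetz_certificate :: "'a::field \<Rightarrow> 'a \<Rightarrow> 'a \<Rightarrow> 'a \<Rightarrow> nat \<Rightarrow> nat \<Rightarrow> 'a" where
  "saalschuetz_certificate q A B C N m = (if m = 0 then 0 else
     saalschuetz_term q A B C N (m - 1) * inverse (q ^ (m - 1))
     * (1 - A * q ^ (m - 1)) * (1 - B * q ^ (m - 1)))"

lemma saalschuetz_sum_Suc:
  "saalschuetz_sum q A B C (Suc N) = saalschuetz_ratio q A B C N * saalschuetz_sum q A B C N"
  unfolding saalschuetz_sum_def saalschuetz_ratio_def qpochhammer_Suc by (simp add: field_simps)

lemma saalschuetz_term_beyond: "q \<noteq> 0 \<Longrightarrow> saalschuetz_term q A B C N (Suc N) = 0"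
  unfolding saalschuetz_term_def qpochhammer_Suc by simp

lemma saalschuetz_param_Suc:
  "q \<noteq> 0 \<Longrightarrow> saalschuetz_param q A B C (Suc N) = saalschuetz_param q A B C N / q"
  unfolding saalschuetz_param_def by (simp add: field_simps)

context
  fixes q A B C :: "'a::field"
  assumes q_nonzero: "q \<noteq> 0" and q_powers: "\<And>n. q ^ Suc n \<noteq> 1"
    and A_nonzero: "A \<noteq> 0" and B_nonzero: "B \<noteq> 0" and C_nonzero: "C \<noteq> 0"
begin

private abbreviation "T \<equiv> saalschuetz_term q A B C"
private abbreviation "H \<equiv> saalschuetz_certificate q A B C"
private abbreviation "\<rho> \<equiv> saalschuetz_ratio q A B C"

lemma saalschuetz_step_first: "T (Suc N) 0 - \<rho> N * T N 0 = H N 1 - H N 0"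
proof -
  define D where "D = saalschuetz_param q A B C N"
  define P where "P = qpochhammer_ivl C q 0 N * qpochhammer_ivl D q 0 N"
  have key: "(1 - C * q ^ N) * (1 - D / q) - \<rho> N = (1 - A) * (1 - B)"
    unfolding saalschuetz_ratio_def D_def saalschuetz_param_def
    using q_nonzero A_nonzero B_nonzero C_nonzero by (simp add: field_simps)
  have "qpochhammer_ivl (saalschuetz_param q A B C (Suc N)) q 0 (Suc N) = (1 - D / q) * qpochhammer_ivl D q 0 N"
    unfolding saalschuetz_param_Suc[OF q_nonzero] D_def[symmetric]
    by (subst qpochhammer_ivl_lower) (simp_all add: qpochhammer_ivl_shift q_nonzero)
  moreover have "qpochhammer_ivl C q 0 (Suc N) = qpochhammer_ivl C q 0 N * (1 - C * q ^ N)"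
    by (simp add: qpochhammer_ivl_upper)
  ultimately have T_Suc: "T (Suc N) 0 = P * ((1 - C * q ^ N) * (1 - D / q))"
    by (simp add: saalschuetz_term_def P_def)
  have T: "T N 0 = P"
    by (simp add: saalschuetz_term_def P_def D_def)
  have "T (Suc N) 0 - \<rho> N * T N 0 = P * ((1 - C * q ^ N) * (1 - D / q) - \<rho> N)"
    unfolding T_Suc T by (simp add: algebra_simps)
  also have "\<dots> = H N 1 - H N 0"
    unfolding key by (simp add: saalschuetz_certificate_def T)
  finally show ?thesis .
qed

lemma saalschuetz_step_middle:
  assumes "k < N"
  shows "T (Suc N) (Suc k) - \<rho> N * T N (Suc k) = H N (Suc (Suc k)) - H N (Suc k)"
proof -
  define D where "D = saalschuetz_param q A B C N"
  define P where "P = q ^ N"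
  define Y where "Y = q ^ k"
  define X where "X = inverse P"
  define Z where "Z = qpochhammer X q k * qpochhammer A q k * qpochhammer B q k
    * qpochhammer_ivl C q (Suc k) N * qpochhammer_ivl D q (Suc k) N / qpochhammer q q k"
  define Z' where "Z' = Z * (1 - A * Y) * (1 - B * Y) / (1 - q * Y)"
  have P0: "P \<noteq> 0" and Y0: "Y \<noteq> 0" using q_nonzero by (auto simp: P_def Y_def)
  have qY: "1 - q * Y \<noteq> 0" using q_powers[of k] by (simp add: Y_def)
  have Qk: "qpochhammer q q k \<noteq> 0" using q_powers by (rule qpochhammer_base_nonzero)
  have pD: "qpochhammer_ivl (saalschuetz_param q A B C (Suc N)) q (Suc k) (Suc N)
      = (1 - D * Y) * qpochhammer_ivl D q (Suc k) N"
    unfolding saalschuetz_param_Suc[OF q_nonzero] D_def[symmetric] using assms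
    by (simp add: qpochhammer_ivl_shift q_nonzero qpochhammer_ivl_lower Y_def)
  have pC: "qpochhammer_ivl C q (Suc k) (Suc N) = qpochhammer_ivl C q (Suc k) N * (1 - C * P)"
    using assms by (simp add: qpochhammer_ivl_upper P_def)
  have qX: "qpochhammer (inverse (q ^ Suc N)) q (Suc k) = (1 - X / q) * qpochhammer X q k"
    unfolding qpochhammer_Suc_shift X_def P_def using q_nonzero by (simp add: field_simps)
  have e1: "T (Suc N) (Suc k) = Z' * (q * Y * (1 - X / q) * (1 - C * P) * (1 - D * Y))"
    unfolding saalschuetz_term_def pD pC qX using Qk qY q_nonzero unfolding Z'_def Z_def
    by (simp add: qpochhammer_Suc Y_def field_simps)
  have e2: "T N (Suc k) = Z' * (q * Y * (1 - X * Y))"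
    unfolding saalschuetz_term_def using Qk qY q_nonzero unfolding Z'_def Z_def
    by (simp add: qpochhammer_Suc Y_def X_def P_def D_def field_simps)
  have e3: "T N k = Z * (Y * (1 - C * Y) * (1 - D * Y))"
    unfolding saalschuetz_term_def using Qk qY assms q_nonzero unfolding Z_def
    by (simp add: qpochhammer_ivl_lower Y_def X_def P_def D_def field_simps)
  have h2: "H N (Suc (Suc k)) = Z' * ((1 - X * Y) * (1 - A * q * Y) * (1 - B * q * Y))"
    using q_nonzero Y0
    by (simp add: saalschuetz_certificate_def e2 Y_def[symmetric] field_simps)
  have h1: "H N (Suc k) = Z' * ((1 - C * Y) * (1 - D * Y) * (1 - q * Y))"
    using Y0 qY by (simp add: saalschuetz_certificate_def e3 Y_def[symmetric] Z'_def field_simps)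
  have key: "q * Y * (1 - X / q) * (1 - C * P) * (1 - D * Y) - \<rho> N * (q * Y * (1 - X * Y))
      = (1 - X * Y) * (1 - A * q * Y) * (1 - B * q * Y) - (1 - C * Y) * (1 - D * Y) * (1 - q * Y)"
    unfolding saalschuetz_ratio_def D_def saalschuetz_param_def X_def P_def[symmetric]
    using q_nonzero A_nonzero B_nonzero C_nonzero P0 by (simp add: field_simps)
  have "T (Suc N) (Suc k) - \<rho> N * T N (Suc k)
      = Z' * (q * Y * (1 - X / q) * (1 - C * P) * (1 - D * Y) - \<rho> N * (q * Y * (1 - X * Y)))"
    unfolding e1 e2 by (simp add: algebra_simps)
  also have "\<dots> = H N (Suc (Suc k)) - H N (Suc k)"
    unfolding key h1 h2 by (simp add: algebra_simps)
  finally show ?thesis .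
qed

lemma saalschuetz_step_last: "T (Suc N) (Suc N) - \<rho> N * T N (Suc N) = H N (Suc (Suc N)) - H N (Suc N)"
proof -
  define P where "P = q ^ N"
  have P0: "P \<noteq> 0" using q_nonzero by (simp add: P_def)
  have qP: "1 - q * P \<noteq> 0" using q_powers[of N] by (simp add: P_def)
  have QN: "qpochhammer q q N \<noteq> 0" using q_powers by (rule qpochhammer_base_nonzero)
  have qX: "qpochhammer (inverse (q ^ Suc N)) q (Suc N) = (1 - inverse P / q) * qpochhammer (inverse P) q N"
    unfolding qpochhammer_Suc_shift P_def using q_nonzero by (simp add: field_simps)
  have "T (Suc N) (Suc N) = - (T N N * inverse P * (1 - A * P) * (1 - B * P))"
    unfolding saalschuetz_term_def qX using q_nonzero QN qP P0
    by (simp add: qpochhammer_Suc P_def field_simps)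
  then show ?thesis by (simp add: saalschuetz_term_beyond[OF q_nonzero] saalschuetz_certificate_def P_def)
qed

lemma saalschuetz_telescoping:
  "m \<le> Suc N \<Longrightarrow> T (Suc N) m - \<rho> N * T N m = H N (Suc m) - H N m"
  using saalschuetz_step_first saalschuetz_step_middle saalschuetz_step_last
  by (cases m) (auto simp: less_Suc_eq_le le_Suc_eq)

theorem q_saalschuetz: "(\<Sum>m\<le>N. T N m) = saalschuetz_sum q A B C N"
proof (induction N)
  case 0
  then show ?case by (simp add: saalschuetz_term_def saalschuetz_sum_def)
next
  case (Suc N)
  have "(\<Sum>m\<le>Suc N. T (Suc N) m - \<rho> N * T N m) = (\<Sum>m<Suc (Suc N). H N (Suc m) - H N m)"
    by (rule sum.cong) (auto simp: saalschuetz_telescoping)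
  also have "\<dots> = H N (Suc (Suc N)) - H N 0"
    by (rule sum_lessThan_telescope)
  also have "\<dots> = 0"
    by (simp add: saalschuetz_certificate_def saalschuetz_term_beyond[OF q_nonzero])
  finally have "(\<Sum>m\<le>Suc N. T (Suc N) m) = \<rho> N * (\<Sum>m\<le>Suc N. T N m)"
    by (simp only: sum_subtractf sum_distrib_left right_minus_eq)
  also have "\<dots> = \<rho> N * saalschuetz_sum q A B C N"
    using Suc.IH by (simp add: saalschuetz_term_beyond[OF q_nonzero])
  finally show ?case by (simp add: saalschuetz_sum_Suc)
qed

end

section \<open>Evaluation of the terminating series\<close>

definition phibar_term :: "complex list \<Rightarrow> complex list \<Rightarrow> complex \<Rightarrow> complex \<Rightarrow> nat \<Rightarrow> nat \<Rightarrow> complex" where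
  "phibar_term as bs q z n k = z ^ k * qpoch (q powi (- int n)) q (int k) / qpoch q q (int k) *
     (\<Prod>ab\<leftarrow>zip as bs. qpoch (fst ab) q (int k) * qpoch (snd ab * q ^ k) q (int n - int k))"

lemma phibar_eq_sum_phibar_term: "phibar n as bs q z = (\<Sum>k=0..n. phibar_term as bs q z n k)"
  by (simp add: phibar_def phibar_term_def)

lemma phibar_term_numerator_base:
  assumes "qpochhammer q q k \<noteq> 0"
  shows "phibar_term [x, y, q] [u, v, w] q q n k
    = q ^ k * qpoch (q powi (- int n)) q (int k) * qpoch x q (int k) * qpoch y q (int k)
      * qpoch (u * q ^ k) q (int n - int k) * qpoch (v * q ^ k) q (int n - int k)
      * qpoch (w * q ^ k) q (int n - int k)"
  using assms by (simp add: phibar_term_def qpoch_of_nat field_simps)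

lemma phibar_term_vanish:
  fixes q :: complex
  assumes "q \<noteq> 0" and "k < d" and "d \<le> n"
  shows "phibar_term [x, y, z] [u, q powi (1 - int d), w] q z' n k = 0"
proof -
  have "1 - int d + int (d - 1) = 0"
    using assms(2) by simp
  from power_int_mult_eq[OF assms(1) this]
  have "q powi (1 - int d) * q ^ (d - 1) = 1"
    by (simp only: power_int_of_nat power_int_0_right)
  then have "q powi (1 - int d) * q ^ k * q ^ (d - 1 - k) = 1"
    using assms(2) by (simp add: mult.assoc flip: power_add)
  then have zero: "qpochhammer (q powi (1 - int d) * q ^ k) q (n - k) = 0"
    by (rule qpochhammer_eq_0[rotated]) (use assms in simp)
  have e: "int n - int k = int (n - k)"
    using assms by simp
  show ?thesis
    unfolding phibar_term_def e qpoch_of_nat by (simp add: zero)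
qed

lemma phibar_term_eq_saalschuetz_term:
  fixes Q a b :: complex and N d j m :: nat
  assumes Q: "Q \<noteq> 0" and Q_powers: "\<And>n. Q ^ Suc n \<noteq> 1" and a: "a \<noteq> 0" and "m \<le> N"
  defines "A \<equiv> inverse (Q ^ j)" and "B \<equiv> a * b * Q ^ d" and "C \<equiv> a * Q ^ d"
  shows "phibar_term [Q powi (- int (j + d)), a * b, Q]
      [a, Q powi (1 - int d), b * Q powi (1 - int (N + d) - int j)] Q Q (N + d) (d + m)
    = Q ^ d * qpochhammer (inverse (Q ^ (N + d))) Q d * qpochhammer (inverse (Q ^ (j + d))) Q d
      * qpochhammer (a * b) Q d * qpochhammer Q Q N * saalschuetz_term Q A B C N m"
proof -
  have qfac: "qpochhammer Q Q n \<noteq> 0" for n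
    using Q_powers by (rule qpochhammer_base_nonzero)
  have e: "int (N + d) - int (d + m) = int (N - m)"
    using assms by simp
  have x1: "Q powi (- int (N + d)) = inverse (Q ^ (N + d))"
    and x2: "Q powi (- int (j + d)) = inverse (Q ^ (j + d))"
    by (simp_all only: power_int_minus power_int_of_nat)
  have y1: "inverse (Q ^ (N + d)) * Q ^ d = inverse (Q ^ N)" and y2: "inverse (Q ^ (j + d)) * Q ^ d = A"
    using Q by (simp_all add: A_def power_add)
  have w1: "a * Q ^ (d + m) = C * Q ^ m"
    by (simp add: C_def power_add)
  have "1 - int d + int (d + m) = int (Suc m)"
    by simp
  from power_int_mult_eq[OF Q this]
  have w2: "Q powi (1 - int d) * Q ^ (d + m) = Q * Q ^ m"
    by (simp only: power_int_of_nat power_Suc)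
  have "Q powi (1 - int (N + d) - int j) * Q powi int (d + m) = Q powi (1 - int N - int j + int m)"
    by (rule power_int_mult_eq[OF Q]) simp
  also have "\<dots> = Q powi (1 - int N - int j) * Q powi int m"
    by (rule power_int_mult_eq[OF Q, symmetric]) simp
  finally have "Q powi (1 - int (N + d) - int j) * Q ^ (d + m) = Q powi (1 - int N - int j) * Q ^ m"
    by (simp only: power_int_of_nat)
  moreover have "Q powi (1 - int N - int j) = Q * inverse (Q ^ N) * inverse (Q ^ j)"
    using Q by (simp add: power_int_diff power_int_add field_simps)
  moreover have "saalschuetz_param Q A B C N = b * Q * inverse (Q ^ N) * inverse (Q ^ j)"
    unfolding saalschuetz_param_def A_def B_def C_def using Q a by (simp add: field_simps)
  ultimately have w3:
    "b * Q powi (1 - int (N + d) - int j) * Q ^ (d + m) = saalschuetz_param Q A B C N * Q ^ m"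
    by (simp add: ac_simps)
  have "qpochhammer (Q * Q ^ m) Q (N - m) = qpochhammer Q Q N / qpochhammer Q Q m"
    using qpochhammer_add[of Q Q m "N - m"] qfac[of m] assms by (simp add: field_simps)
  then show ?thesis
    unfolding phibar_term_numerator_base[OF qfac] e qpoch_of_nat x1 x2 w1 w2 w3
      qpochhammer_shifted[OF assms(4)] qpochhammer_add y1 y2
    using qfac[of m] by (simp add: saalschuetz_term_def B_def power_add field_simps)
qed

lemma phibar_eq_saalschuetz:
  fixes Q a b :: complex and N d j :: nat
  assumes Q: "Q \<noteq> 0" and Q_powers: "\<And>n. Q ^ Suc n \<noteq> 1" and a: "a \<noteq> 0"
  defines "A \<equiv> inverse (Q ^ j)" and "B \<equiv> a * b * Q ^ d" and "C \<equiv> a * Q ^ d"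
  shows "phibar (N + d) [Q powi (- int (j + d)), a * b, Q]
           [a, Q powi (1 + int j - int (j + d)), b * Q powi (1 - int (N + d) - int j)] Q Q
    = Q ^ d * qpochhammer (inverse (Q ^ (N + d))) Q d * qpochhammer (inverse (Q ^ (j + d))) Q d
      * qpochhammer (a * b) Q d * qpochhammer Q Q N * (\<Sum>m\<le>N. saalschuetz_term Q A B C N m)"
proof -
  define K where "K = Q ^ d * qpochhammer (inverse (Q ^ (N + d))) Q d * qpochhammer (inverse (Q ^ (j + d))) Q d
    * qpochhammer (a * b) Q d * qpochhammer Q Q N"
  define f where "f = phibar_term [Q powi (- int (j + d)), a * b, Q]
    [a, Q powi (1 - int d), b * Q powi (1 - int (N + d) - int j)] Q Q (N + d)"
  have "1 + int j - int (j + d) = 1 - int d"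
    by simp
  then have "phibar (N + d) [Q powi (- int (j + d)), a * b, Q]
      [a, Q powi (1 + int j - int (j + d)), b * Q powi (1 - int (N + d) - int j)] Q Q = (\<Sum>k=0..N + d. f k)"
    by (simp add: f_def phibar_eq_sum_phibar_term)
  also have "\<dots> = (\<Sum>k=d..N + d. f k)"
    by (rule sum.mono_neutral_right) (auto simp: f_def phibar_term_vanish[OF Q])
  also have "\<dots> = (\<Sum>m\<le>N. f (d + m))"
    using sum.shift_bounds_cl_nat_ivl[of f 0 d N] by (simp add: atLeast0AtMost add.commute)
  also have "\<dots> = (\<Sum>m\<le>N. K * saalschuetz_term Q A B C N m)"
    unfolding f_def K_def A_def B_def C_def
    by (rule sum.cong[OF refl], rule phibar_term_eq_saalschuetz_term[OF Q Q_powers a]) simp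
  finally show ?thesis
    by (simp add: K_def sum_distrib_left)
qed

lemma saalschuetz_sum_eq_inverse_base:
  fixes Q a b :: complex
  assumes Q: "Q \<noteq> 0" and a: "a \<noteq> 0" and b: "b \<noteq> 0"
  shows "saalschuetz_sum Q (inverse (Q ^ j)) (a * b * Q ^ d) (a * Q ^ d) N
    = qpochhammer (a * Q ^ (j + d)) Q N * Q powi (- int (j * N)) * qpochhammer b (1 / Q) N"
proof -
  have "a * Q ^ d / inverse (Q ^ j) = a * Q ^ (j + d)" and "a * Q ^ d / (a * b * Q ^ d) = 1 / b"
    and "inverse (Q ^ j) * (a * b * Q ^ d) / (a * Q ^ d) = b / Q ^ j"
    using Q a b by (simp_all add: power_add field_simps)
  moreover have "qpochhammer (1 / b) Q N * (\<Prod>i<N. - (b / Q ^ j) * inverse (Q ^ i))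
      = (\<Prod>i<N. (1 - b * (1 / Q) ^ i) * inverse (Q ^ j))"
    unfolding qpochhammer_def prod.distrib[symmetric]
    using Q b by (intro prod.cong) (simp_all add: power_divide field_simps)
  moreover have "inverse (Q ^ j) ^ N = Q powi (- int (j * N))"
    by (simp only: power_int_minus power_int_of_nat power_inverse power_mult)
  ultimately show ?thesis
    by (simp add: saalschuetz_sum_def prod.distrib qpochhammer_def)
qed

lemma phibar_closed_form:
  fixes Q a b :: complex and N d j :: nat
  assumes Q: "Q \<noteq> 0" and Q_powers: "\<And>n. Q ^ Suc n \<noteq> 1" and a: "a \<noteq> 0" and b: "b \<noteq> 0"
    and Y: "qpoch (b * Q powi (1 - int N)) Q (int N - int j) \<noteq> 0"
  shows "phibar (N + d) [Q powi (- int (j + d)), a * b, Q]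
           [a, Q powi (1 + int j - int (j + d)), b * Q powi (1 - int (N + d) - int j)] Q Q
    = Q powi (- int ((j + d) * (N + d))) * qpochhammer Q Q (N + d) * qpochhammer Q Q (j + d) / qpochhammer Q Q j
      * qpochhammer (a * b) Q d * qpochhammer (a * Q ^ (j + d)) Q N * qpochhammer b (1 / Q) j
      * qpoch (b * Q powi (1 - int N)) Q (int N - int j)"
proof -
  define A B C where "A = inverse (Q ^ j)" and "B = a * b * Q ^ d" and "C = a * Q ^ d"
  define Y where "Y = qpoch (b * Q powi (1 - int N)) Q (int N - int j)"
  have qfac: "qpochhammer Q Q n \<noteq> 0" for n
    using Q_powers by (rule qpochhammer_base_nonzero)
  have "(\<Sum>m\<le>N. saalschuetz_term Q A B C N m) = saalschuetz_sum Q A B C N"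
    by (rule q_saalschuetz) (use Q Q_powers a b in \<open>simp_all add: A_def B_def C_def\<close>)
  also have "\<dots> = qpochhammer (a * Q ^ (j + d)) Q N * Q powi (- int (j * N)) * qpochhammer b (1 / Q) N"
    unfolding A_def B_def C_def by (rule saalschuetz_sum_eq_inverse_base[OF Q a b])
  also have "qpochhammer b (1 / Q) N = qpochhammer b (1 / Q) j * Y"
    unfolding Y_def by (rule qpochhammer_inverse_base_split[OF Q Y])
  finally have saalschuetz: "(\<Sum>m\<le>N. saalschuetz_term Q A B C N m)
      = qpochhammer (a * Q ^ (j + d)) Q N * Q powi (- int (j * N)) * (qpochhammer b (1 / Q) j * Y)" .
  have reflect_N: "qpochhammer (inverse (Q ^ (N + d))) Q d
      = (-1) ^ d * Q powi (int (d choose 2) - int (N + d) * int d) * qpochhammer Q Q (N + d) / qpochhammer Q Q N"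
    using qpochhammer_reflection[OF Q, of d "N + d"] qfac[of N] by (simp add: field_simps)
  have reflect_j: "qpochhammer (inverse (Q ^ (j + d))) Q d
      = (-1) ^ d * Q powi (int (d choose 2) - int (j + d) * int d) * qpochhammer Q Q (j + d) / qpochhammer Q Q j"
    using qpochhammer_reflection[OF Q, of d "j + d"] qfac[of j] by (simp add: field_simps)
  have sign: "(-1 :: complex) ^ d * (-1) ^ d = 1"
    by (simp flip: power_mult_distrib)
  have e: "int d + (int (d choose 2) - int (N + d) * int d) + (int (d choose 2) - int (j + d) * int d)
      + - int (j * N) = - int ((j + d) * (N + d))"
    using two_times_choose_two[of d] by (simp add: algebra_simps)
  have "Q ^ d * Q powi (int (d choose 2) - int (N + d) * int d)
      * Q powi (int (d choose 2) - int (j + d) * int d) * Q powi (- int (j * N))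
      = Q powi (int d + (int (d choose 2) - int (N + d) * int d) + (int (d choose 2) - int (j + d) * int d)
      + - int (j * N))"
    by (simp only: power_int_add[OF disjI1[OF Q]] power_int_of_nat)
  then have exponent: "Q ^ d * Q powi (int (d choose 2) - int (N + d) * int d)
      * Q powi (int (d choose 2) - int (j + d) * int d) * Q powi (- int (j * N))
      = Q powi (- int ((j + d) * (N + d)))"
    unfolding e .
  show ?thesis
    unfolding phibar_eq_saalschuetz[OF Q Q_powers a] A_def[symmetric] B_def[symmetric] C_def[symmetric]
      saalschuetz reflect_N reflect_j exponent[symmetric] Y_def[symmetric]
    using qfac[of N] qfac[of j] sign by (simp add: field_simps)
qed

section \<open>The cross vertex weight at $z = s_2/s_1$\<close>

lemma powr_choose_two:
  assumes "0 < q"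
  shows "q powr (real k * (real k + 2 * real n - 1) / 2) = q ^ ((k choose 2) + k * n)"
proof -
  have "real k * (real k + 2 * real n - 1) / 2 = real ((k choose 2) + k * n)"
    using arg_cong[OF two_times_choose_two[of k], of real_of_int] by (simp add: algebra_simps)
  then show ?thesis
    using powr_realpow[OF assms] by (simp only:)
qed

lemma Rw_ratio_eq_phibar:
  fixes q :: real and s1 s2 :: complex and N d j :: nat
  assumes q: "0 < q" and s1: "s1 \<noteq> 0" and s2: "s2 \<noteq> 0"
  defines "Q \<equiv> complex_of_real q" and "a \<equiv> s2 ^ 2" and "b \<equiv> inverse (s1 ^ 2)"
  shows "Rw q (s2 / s1) s1 s2 (N + d) N (j + d) j
     = (- s2) ^ (j + d) * Q ^ (((j + d) choose 2) + (j + d) * N) * s2 powi (int j - int d)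
       * (1 / qpochhammer (1 / Q) (1 / Q) d)
       / (qpochhammer Q Q (N + d) * qpochhammer a Q (N + d + j)
          * qpoch (b * Q powi (1 - int N)) Q (int N - int j))
       * phibar (N + d) [Q powi (- int (j + d)), a * b, Q]
           [a, Q powi (1 + int j - int (j + d)), b * Q powi (1 - int (N + d) - int j)] Q Q"
proof -
  have z: "s2 / s1 * s1 / s2 = 1" "s2 / s1 * s1 * s2 = a" "s2 / s1 * inverse s1 * s2 = a * b"
    "Q * inverse (s2 / s1) * inverse s1 * s2 = Q" "- s1 * (s2 / s1) = - s2"
    using s1 s2 by (simp_all add: a_def b_def power2_eq_square field_simps)
  have e: "int N + int j - int (N + d) = int j - int d"
    by simp
  have "qpoch 1 Q (int j - int (j + d)) = 1 / qpochhammer (1 / Q) (1 / Q) d"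
    using qpoch_minus[of 1 Q d] by simp
  then show ?thesis
    unfolding Rw_def Let_def powr_choose_two[OF q] of_real_power Q_def[symmetric] z e qpoch_of_nat
      a_def[symmetric] b_def[symmetric]
    by simp
qed

lemma qbb_eq_qpochhammer_inverse_base:
  fixes q :: real and a b :: complex
  assumes "q \<noteq> 0"
  defines "Q \<equiv> complex_of_real q"
  shows "qbb q (a * b) a j (j + d)
    = (-1) ^ j * a ^ j * Q ^ (j choose 2) * qpochhammer b (1 / Q) j * qpochhammer (a * b) Q d
      / qpochhammer a Q (j + d) * (qpochhammer Q Q (j + d) / (qpochhammer Q Q j * qpochhammer Q Q d))"
proof -
  have Q: "Q \<noteq> 0"
    using assms by (simp add: Q_def)
  have "(\<Prod>i<j. a * b - a * Q ^ i) = (\<Prod>i<j. (- a) * (Q ^ i - b))"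
    by (rule prod.cong) (simp_all add: algebra_simps)
  also have "\<dots> = (- a) ^ j * (Q ^ (j choose 2) * qpochhammer b (1 / Q) j)"
    by (simp only: prod.distrib prod_constant card_lessThan prod_power_minus_eq_qpochhammer[OF Q])
  also have "\<dots> = (-1) ^ j * a ^ j * Q ^ (j choose 2) * qpochhammer b (1 / Q) j"
    by (simp only: power_minus[of a] mult.assoc)
  finally show ?thesis
    unfolding qbb_def Let_def Q_def[symmetric] qpoch_of_nat by simp
qed

lemma Rw_eq_qbb_conserving:
  fixes q :: real and s1 s2 :: complex and N d j :: nat
  assumes q: "0 < q" "q < 1" and s1: "s1 \<noteq> 0" and s2: "s2 \<noteq> 0"
    and Y: "qpoch (inverse (s1 ^ 2) * complex_of_real q powi (1 - int N)) (complex_of_real q)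
      (int N - int j) \<noteq> 0"
    and denominator: "qpoch ((s2 / s1) * s1 * s2) (complex_of_real q) (int (N + d + j)) \<noteq> 0"
  shows "Rw q (s2 / s1) s1 s2 (N + d) N (j + d) j = qbb q (s2 ^ 2 / s1 ^ 2) (s2 ^ 2) j (j + d)"
proof -
  define Q where "Q = complex_of_real q"
  define a b where "a = s2 ^ 2" and "b = inverse (s1 ^ 2)"
  define Y where "Y = qpoch (b * Q powi (1 - int N)) Q (int N - int j)"
  have Q0: "Q \<noteq> 0"
    using q by (simp add: Q_def)
  have Q_powers: "Q ^ Suc n \<noteq> 1" for n
    using power_Suc_less_one[OF q, of n] unfolding Q_def of_real_power[symmetric] of_real_eq_1_iff by simp
  have a0: "a \<noteq> 0" and b0: "b \<noteq> 0" and Y0: "Y \<noteq> 0"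
    using s1 s2 Y by (simp_all add: a_def b_def Y_def Q_def)
  have qfac: "qpochhammer Q Q n \<noteq> 0" for n
    using Q_powers by (rule qpochhammer_base_nonzero)
  have split: "qpochhammer a Q (N + d + j) = qpochhammer a Q (j + d) * qpochhammer (a * Q ^ (j + d)) Q N"
    using qpochhammer_add[of a Q "j + d" N] by (simp add: ac_simps)
  have "s2 / s1 * s1 * s2 = a"
    using s1 by (simp add: a_def power2_eq_square)
  then have "qpochhammer a Q (N + d + j) \<noteq> 0"
    using denominator unfolding qpoch_of_nat Q_def by simp
  then have nonzero: "qpochhammer a Q (j + d) \<noteq> 0" "qpochhammer (a * Q ^ (j + d)) Q N \<noteq> 0"
    unfolding split by simp_all
  have "int (j + d) + (int j - int d) = int (2 * j)"
    by simp
  from power_int_mult_eq[OF s2 this]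
  have "s2 ^ (j + d) * s2 powi (int j - int d) = a ^ j"
    by (simp only: power_int_of_nat a_def power_mult)
  then have sign: "(- s2) ^ (j + d) * s2 powi (int j - int d) = (-1) ^ (j + d) * a ^ j"
    by (simp only: power_minus[of s2] mult.assoc)
  have "int (((j + d) choose 2) + (j + d) * N) + - int ((j + d) * (N + d))
      = int (j choose 2) + - int (Suc d choose 2)"
    using two_times_choose_two[of d] by (simp add: add_choose_two Suc_choose_two algebra_simps)
  then have exponent: "Q ^ (((j + d) choose 2) + (j + d) * N) * Q powi (- int ((j + d) * (N + d)))
      = Q ^ (j choose 2) * Q powi (- int (Suc d choose 2))"
    by (simp only: power_int_add[OF disjI1[OF Q0], symmetric] flip: power_int_of_nat)
  have "Rw q (s2 / s1) s1 s2 (N + d) N (j + d) j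
     = (- s2) ^ (j + d) * s2 powi (int j - int d) * (Q ^ (((j + d) choose 2) + (j + d) * N)
       * Q powi (- int ((j + d) * (N + d)))) / ((-1) ^ d * Q powi (- int (Suc d choose 2)))
       * qpochhammer Q Q (j + d) / (qpochhammer Q Q j * qpochhammer Q Q d)
       * qpochhammer (a * b) Q d * qpochhammer b (1 / Q) j / qpochhammer a Q (j + d)"
    unfolding Rw_ratio_eq_phibar[OF q(1) s1 s2] Q_def[symmetric] a_def[symmetric] b_def[symmetric]
      phibar_closed_form[OF Q0 Q_powers a0 b0 Y0[unfolded Y_def]] Y_def[symmetric]
      qpochhammer_inverse_base[OF Q0] split
    using qfac[of "N + d"] qfac[of d] qfac[of j] nonzero Y0 Q0 by (simp add: field_simps)
  also have "\<dots> = qbb q (a * b) a j (j + d)"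
    unfolding qbb_eq_qpochhammer_inverse_base[OF less_imp_neq[OF q(1), symmetric]] Q_def[symmetric]
      sign exponent
    using Q0 qfac[of d] qfac[of j] nonzero by (simp add: power_add field_simps)
  also have "a * b = s2 ^ 2 / s1 ^ 2"
    by (simp add: a_def b_def divide_inverse)
  finally show ?thesis
    by (simp only: a_def)
qed

theorem proposition3p5:
  fixes q :: real and s1 s2 :: complex and i1 i2 j1 j2 :: nat
  assumes "0 < q" and "q < 1"
    and "s1 \<noteq> 0" and "s2 \<noteq> 0"
    and "qpoch ((s2 / s1) * s1 * s2) (complex_of_real q) (int (i1 + j2)) \<noteq> 0"
    and "qpoch (inverse (s1 ^ 2) * complex_of_real q powi (1 - int i2)) (complex_of_real q)
           (int i2 - int j2) \<noteq> 0"
    and "qpoch (s2 ^ 2) (complex_of_real q) (int j1) \<noteq> 0"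
  shows "Rw q (s2 / s1) s1 s2 i1 i2 j1 j2 =
           (if i1 + j2 = i2 + j1 then 1 else 0) * (if j2 \<le> j1 then 1 else 0)
             * qbb q (s2 ^ 2 / s1 ^ 2) (s2 ^ 2) j2 j1"
proof (cases "i1 + j2 = i2 + j1")
  case False
  then show ?thesis
    by (simp add: Rw_def)
next
  case conserving: True
  show ?thesis
  proof (cases "j2 \<le> j1")
    case False
    have "qpochhammer 1 (complex_of_real q) (j2 - j1) = 0"
      by (rule qpochhammer_eq_0[of 0]) (use False in simp_all)
    moreover have z: "s2 / s1 * s1 / s2 = 1" and e: "int j2 - int j1 = int (j2 - j1)"
      using assms(3,4) False by simp_all
    ultimately show ?thesis
      using False unfolding Rw_def Let_def z e qpoch_of_nat by simp
  next
    case True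
    then obtain d where j1: "j1 = j2 + d"
      using le_Suc_ex by blast
    with conserving have i1: "i1 = i2 + d"
      by simp
    have "Rw q (s2 / s1) s1 s2 (i2 + d) i2 (j2 + d) j2 = qbb q (s2 ^ 2 / s1 ^ 2) (s2 ^ 2) j2 (j2 + d)"
      by (rule Rw_eq_qbb_conserving) (use assms i1 in simp_all)
    then show ?thesis
      using conserving True i1 j1 by simp
  qed
qed

end
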